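(* Let $X$ be a topological space with base point $x_0$ such that there exists a nonconstant (nontrivial) path in $X$ starting at $x_0$. Let $\Omega X=\{\alpha:[0,1]\to X \text{ continuous}:\alpha(0)=\alpha(1)=x_0\}$ with the compact-open topology, and $\Omega_{\mathrm{tf}}=\{\alpha\in\Omega X: \alpha(t)=\alpha(1-t)\ \text{for all } t\in[0,1]\}$. Then the inclusion $\Omega X\setminus\Omega_{\mathrm{tf}}\hookrightarrow\Omega X$ is a homotopy equivalence. *)

theory Defs
  imports "HOL-Analysis.Analysis" "HOL-Library.FuncSet"
begin

text \<open>Loops in X based at x0, as functions on [0,1] (extensional: undefined outside [0,1],
so that each loop is represented by exactly one HOL function).\<close>
definition loops :: "'a topology \<Rightarrow> 'a \<Rightarrow> (real \<Rightarrow> 'a) set" where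
  "loops X x0 = {\<alpha>. pathin X \<alpha> \<and> \<alpha> 0 = x0 \<and> \<alpha> 1 = x0 \<and> \<alpha> \<in> extensional {0..1}}"

definition compact_open_topology :: "'a topology \<Rightarrow> (real \<Rightarrow> 'a) topology" where
  "compact_open_topology X =
     topology_generated_by
       {{f. f ` K \<subseteq> U} | K U. compactin (top_of_set {0..1}) K \<and> openin X U}"

definition loop_space :: "'a topology \<Rightarrow> 'a \<Rightarrow> (real \<Rightarrow> 'a) topology" where
  "loop_space X x0 = subtopology (compact_open_topology X) (loops X x0)"

definition tf_loops :: "'a topology \<Rightarrow> 'a \<Rightarrow> (real \<Rightarrow> 'a) set" where
  "tf_loops X x0 = {\<alpha> \<in> loops X x0. \<forall>t\<in>{0..1}. \<alpha> t = \<alpha> (1 - t)}"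

definition homotopy_equivalence_map :: "'a topology \<Rightarrow> 'b topology \<Rightarrow> ('a \<Rightarrow> 'b) \<Rightarrow> bool" where
  "homotopy_equivalence_map X Y f \<longleftrightarrow>
     continuous_map X Y f \<and>
     (\<exists>g. continuous_map Y X g \<and>
          homotopic_with (\<lambda>h. True) X X (g \<circ> f) id \<and>
          homotopic_with (\<lambda>h. True) Y Y (f \<circ> g) id)"

end

theory Submission
  imports Defs
begin

text \<open>
  Fix a path \<open>p\<close> from \<open>x0\<close> with \<open>p u \<noteq> x0\<close>. The deformation \<open>whisker_homotopy p s\<close>
  squeezes a loop \<open>\<alpha>\<close> into \<open>[s/4, 1 - s/4]\<close>, waits at \<open>x0\<close> before it and afterwards runs
  along \<open>p\<close> out to \<open>p s\<close> and back. At \<open>s = 0\<close> it is the identity. It never creates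
  time-reversal symmetry, since the middle part is placed symmetrically about \<open>1/2\<close> and
  determines \<open>\<alpha>\<close>. At \<open>s = 1\<close> its values are never symmetric: at time \<open>1 - u/8\<close> it
  passes through \<open>p u\<close>, at the mirror time \<open>u/8\<close> it still sits at \<open>x0\<close>. So
  \<open>whisker_homotopy p 1\<close> is a homotopy inverse of the inclusion, the deformation itself
  providing both homotopies.
\<close>

lemma topspace_compact_open_topology [simp]: "topspace (compact_open_topology X) = UNIV"
  unfolding compact_open_topology_def topology_generated_by_topspace
  by (auto intro!: exI[of _ "{}"])

lemma openin_compact_open_topologyI:
  assumes "compactin (top_of_set {0..1}) K" "openin X U"
  shows "openin (compact_open_topology X) {f. f ` K \<subseteq> U}"
  unfolding compact_open_topology_def
  by (rule topology_generated_by_Basis) (use assms in blast)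

lemma continuous_map_into_compact_open_topology:
  fixes F :: "'z \<Rightarrow> real \<Rightarrow> 'a"
  assumes F: "continuous_map (prod_topology Z (top_of_set {0..1})) X (\<lambda>(z,t). F z t)"
  shows "continuous_map Z (compact_open_topology X) F"
  unfolding compact_open_topology_def
proof (rule continuous_on_generated_topo)
  show "F ` topspace Z \<subseteq> \<Union> {{f. f ` K \<subseteq> U} | K U. compactin (top_of_set {0..1}) K \<and> openin X U}"
    by (auto intro!: exI[of _ "{}"])
next
  fix W :: "(real \<Rightarrow> 'a) set"
  assume "W \<in> {{f. f ` K \<subseteq> U} | K U. compactin (top_of_set {0..1}) K \<and> openin X U}"
  then obtain K U where W: "W = {f. f ` K \<subseteq> U}" and K: "compactin (top_of_set {0..1}) K"
    and U: "openin X U" by blast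
  let ?P = "prod_topology Z (top_of_set {0..1})"
  have preimage: "openin ?P {x \<in> topspace ?P. (\<lambda>(z,t). F z t) x \<in> U}"
    using openin_continuous_map_preimage[OF F U] .
  show "openin Z (F -` W \<inter> topspace Z)"
  proof (subst openin_subopen, intro ballI)
    fix z assume z: "z \<in> F -` W \<inter> topspace Z"
    then have "{z} \<times> K \<subseteq> {x \<in> topspace ?P. (\<lambda>(z,t). F z t) x \<in> U}"
      using W compactin_subset_topspace[OF K] by auto
    from tube_lemma_right[OF preimage K _ this] z
    obtain T V where "openin Z T" "z \<in> T" "K \<subseteq> V"
      "T \<times> V \<subseteq> {x \<in> topspace ?P. (\<lambda>(z,t). F z t) x \<in> U}" by auto
    then show "\<exists>T. openin Z T \<and> z \<in> T \<and> T \<subseteq> F -` W \<inter> topspace Z"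
      using W openin_subset[of Z T] by (intro exI[of _ T]) force
  qed
qed

lemma continuous_map_evaluation:
  assumes S: "\<And>\<alpha>. \<alpha> \<in> S \<Longrightarrow> pathin X \<alpha>"
  shows "continuous_map (prod_topology (subtopology (compact_open_topology X) S) (top_of_set {0..1}))
           X (\<lambda>(\<alpha>,t). \<alpha> t)"
proof -
  let ?P = "prod_topology (subtopology (compact_open_topology X) S) (top_of_set {0..1})"
  have P: "topspace ?P = S \<times> {0..1}" by simp
  show ?thesis unfolding continuous_map_def
  proof (intro conjI allI impI)
    show "(\<lambda>(\<alpha>,t). \<alpha> t) \<in> topspace ?P \<rightarrow> topspace X"
      using S path_image_subset_topspace by fastforce
  next
    fix U assume U: "openin X U"
    show "openin ?P {x \<in> topspace ?P. (\<lambda>(\<alpha>,t). \<alpha> t) x \<in> U}"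
    proof (subst openin_subopen, intro ballI)
      fix x assume "x \<in> {x \<in> topspace ?P. (\<lambda>(\<alpha>,t). \<alpha> t) x \<in> U}"
      then obtain \<alpha> t where x: "x = (\<alpha>, t)" and \<alpha>: "\<alpha> \<in> S" and t: "t \<in> {0..1}"
        and "\<alpha> t \<in> U" by auto
      moreover have "openin (top_of_set {0..1}) {u \<in> {0..1}. \<alpha> u \<in> U}"
        using openin_continuous_map_preimage[OF S[OF \<alpha>, unfolded pathin_def] U] by simp
      ultimately obtain e where "e > 0" and e: "\<And>u. u \<in> {0..1} \<Longrightarrow> dist u t < e \<Longrightarrow> \<alpha> u \<in> U"
        unfolding openin_euclidean_subtopology_iff by blast
      define K where "K = {0..1} \<inter> cball t (e/2)"
      define A where "A = {f. f ` K \<subseteq> U} \<inter> S"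
      define V where "V = {0..1} \<inter> ball t (e/2)"
      have "openin (compact_open_topology X) {f. f ` K \<subseteq> U}"
        by (rule openin_compact_open_topologyI)
          (auto simp: K_def compactin_subtopology compact_Int U)
      then have "openin ?P (A \<times> V)"
        unfolding A_def V_def by (auto simp: openin_prod_Times_iff openin_subtopology)
      moreover have "\<alpha> ` K \<subseteq> U"
        using \<open>e > 0\<close> by (auto simp: K_def dist_commute intro!: e)
      then have "x \<in> A \<times> V"
        using x \<alpha> t \<open>e > 0\<close> by (auto simp: A_def V_def)
      moreover have "A \<times> V \<subseteq> {x \<in> topspace ?P. (\<lambda>(\<alpha>,t). \<alpha> t) x \<in> U}"
        by (auto simp: A_def V_def K_def)
      ultimately show "\<exists>T. openin ?P T \<and> x \<in> T \<and> T \<subseteq> {x \<in> topspace ?P. (\<lambda>(\<alpha>,t). \<alpha> t) x \<in> U}"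
        by blast
    qed
  qed
qed

lemma homotopy_equivalence_map_inclusion:
  fixes H :: "real \<Rightarrow> 'a \<Rightarrow> 'a"
  assumes H: "continuous_map (prod_topology (top_of_set {0..1}) Y) Y (\<lambda>(s,y). H s y)"
    and H0: "\<And>y. y \<in> topspace Y \<Longrightarrow> H 0 y = y"
    and H1: "\<And>y. y \<in> topspace Y \<Longrightarrow> H 1 y \<in> S"
    and HS: "\<And>s y. s \<in> {0..1} \<Longrightarrow> y \<in> S \<Longrightarrow> H s y \<in> S"
    and S: "S \<subseteq> topspace Y"
  shows "homotopy_equivalence_map (subtopology Y S) Y id"
proof -
  have "continuous_map (prod_topology (top_of_set {0..1}) (subtopology Y S)) Y (\<lambda>(s,y). H s y)"
    using continuous_map_from_subtopology[OF H, of "{0..1} \<times> S"]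
    by (simp add: subtopology_Times subtopology_subtopology)
  then have HS_cont: "continuous_map (prod_topology (top_of_set {0..1}) (subtopology Y S))
                        (subtopology Y S) (\<lambda>(s,y). H s y)"
    using HS by (auto simp: continuous_map_in_subtopology)
  have homotopic: "homotopic_with (\<lambda>h. True) Z Z (H 1) id"
    if "continuous_map (prod_topology (top_of_set {0..1}) Z) Z (\<lambda>(s,y). H s y)"
      and "topspace Z \<subseteq> topspace Y" for Z
    using that H0 by (subst homotopic_with_sym, subst homotopic_with)
      (auto intro!: exI[of _ "\<lambda>(s,y). H s y"])
  have "homotopic_with (\<lambda>h. True) Y Y (H 1) id"
    using homotopic[OF H] by simp
  then have "continuous_map Y (subtopology Y S) (H 1)"
    using H1 homotopic_with_imp_continuous_maps by (fastforce simp: continuous_map_in_subtopology)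
  moreover have "continuous_map (subtopology Y S) Y id"
    by (simp add: continuous_map_from_subtopology)
  ultimately show ?thesis
    unfolding homotopy_equivalence_map_def
    using homotopic[OF H] homotopic[OF HS_cont] S by auto
qed

definition whisker_homotopy :: "(real \<Rightarrow> 'a) \<Rightarrow> real \<Rightarrow> (real \<Rightarrow> 'a) \<Rightarrow> real \<Rightarrow> 'a" where
  "whisker_homotopy p s \<alpha> t =
     (if t \<in> {0..1} then
        if t \<le> 1 - s/4 then \<alpha> (max 0 (min 1 ((t - s/4) / (1 - s/2))))
        else p (max 0 (s - \<bar>8*t - 8 + s\<bar>))
      else undefined)"

lemma whisker_homotopy_0:
  assumes "\<alpha> \<in> extensional {0..1}"
  shows "whisker_homotopy p 0 \<alpha> = \<alpha>"
  using assms by (auto simp: whisker_homotopy_def extensional_def fun_eq_iff)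

lemma whisker_homotopy_head:
  assumes "0 \<le> t" "t \<le> s/4" "s \<le> 1"
  shows "whisker_homotopy p s \<alpha> t = \<alpha> 0"
proof -
  have "(t - s/4) / (1 - s/2) \<le> 0"
    using assms by (intro divide_nonpos_pos) auto
  then show ?thesis
    using assms by (simp add: whisker_homotopy_def)
qed

lemma whisker_homotopy_middle:
  assumes "s \<in> {0..1}" "u \<in> {0..1}"
  shows "whisker_homotopy p s \<alpha> (s/4 + u * (1 - s/2)) = \<alpha> u"
proof -
  have "u * (1 - s/2) \<le> 1 - s/2"
    using assms mult_left_le_one_le[of "1 - s/2" u] by auto
  then have "s/4 + u * (1 - s/2) \<le> 1 - s/4"
    by linarith
  moreover have "0 \<le> u * (1 - s/2)"
    using assms by auto
  ultimately show ?thesis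
    using assms by (simp add: whisker_homotopy_def)
qed

lemma whisker_homotopy_tail:
  assumes "u \<in> {0..1}"
  shows "whisker_homotopy p 1 \<alpha> (1 - u/8) = p u"
  using assms by (simp add: whisker_homotopy_def)

lemma whisker_homotopy_1_notin_tf_loops:
  assumes "u \<in> {0..1}" "p u \<noteq> \<alpha> 0"
  shows "whisker_homotopy p 1 \<alpha> \<notin> tf_loops X x0"
proof
  assume tf: "whisker_homotopy p 1 \<alpha> \<in> tf_loops X x0"
  have "1 - u/8 \<in> {0..1}"
    using assms(1) by auto
  then have "whisker_homotopy p 1 \<alpha> (1 - u/8) = whisker_homotopy p 1 \<alpha> (1 - (1 - u/8))"
    using tf unfolding tf_loops_def by blast
  moreover have "whisker_homotopy p 1 \<alpha> (1 - u/8) = p u"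
    using assms(1) by (rule whisker_homotopy_tail)
  moreover have "whisker_homotopy p 1 \<alpha> (1 - (1 - u/8)) = \<alpha> 0"
    using assms(1) by (intro whisker_homotopy_head) auto
  ultimately show False
    using assms(2) by simp
qed

lemma whisker_homotopy_notin_tf_loops:
  assumes "\<alpha> \<in> loops X x0" "\<alpha> \<notin> tf_loops X x0" "s \<in> {0..1}"
  shows "whisker_homotopy p s \<alpha> \<notin> tf_loops X x0"
proof
  assume tf: "whisker_homotopy p s \<alpha> \<in> tf_loops X x0"
  have "\<alpha> \<in> tf_loops X x0"
    unfolding tf_loops_def
  proof (intro CollectI conjI ballI assms(1))
    fix u :: real assume u: "u \<in> {0..1}"
    define t where "t = s/4 + u * (1 - s/2)"
    have mirror: "1 - t = s/4 + (1 - u) * (1 - s/2)"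
      by (simp add: t_def field_simps)
    have "0 \<le> t" "0 \<le> 1 - t"
      using u assms(3) unfolding mirror by (auto simp: t_def)
    then have "t \<in> {0..1}"
      by simp
    then have "whisker_homotopy p s \<alpha> t = whisker_homotopy p s \<alpha> (1 - t)"
      using tf unfolding tf_loops_def by blast
    moreover have "whisker_homotopy p s \<alpha> t = \<alpha> u"
      unfolding t_def using assms(3) u by (rule whisker_homotopy_middle)
    moreover have "whisker_homotopy p s \<alpha> (1 - t) = \<alpha> (1 - u)"
      unfolding mirror using assms(3) u by (intro whisker_homotopy_middle) auto
    ultimately show "\<alpha> u = \<alpha> (1 - u)"
      by simp
  qed
  with assms(2) show False
    by contradiction
qed

lemma continuous_map_whisker_homotopy:
  assumes p: "pathin X p" "p 0 = x0"
  shows "continuous_map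
           (prod_topology (prod_topology (top_of_set {0..1}) (loop_space X x0)) (top_of_set {0..1}))
           X (\<lambda>((s,\<alpha>),t). whisker_homotopy p s \<alpha> t)"
proof -
  let ?Z = "prod_topology (prod_topology (top_of_set {0..1}) (loop_space X x0)) (top_of_set {0..1})"
  have Z: "topspace ?Z = ({0..1} \<times> loops X x0) \<times> {0..1}"
    by (simp add: loop_space_def)
  have s: "continuous_map ?Z euclideanreal (\<lambda>x. fst (fst x))"
    using continuous_map_compose[OF continuous_map_fst continuous_map_fst]
    by (auto simp: o_def intro: continuous_map_into_fulltopology)
  have t: "continuous_map ?Z euclideanreal snd"
    using continuous_map_snd by (rule continuous_map_into_fulltopology)
  define \<phi> where "\<phi> x = max 0 (min 1 ((snd x - fst (fst x)/4) / (1 - fst (fst x)/2)))"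
    for x :: "(real \<times> (real \<Rightarrow> 'a)) \<times> real"
  define \<psi> where "\<psi> x = max 0 (fst (fst x) - \<bar>8 * snd x - 8 + fst (fst x)\<bar>)"
    for x :: "(real \<times> (real \<Rightarrow> 'a)) \<times> real"
  have \<phi>: "continuous_map ?Z (top_of_set {0..1}) \<phi>"
    unfolding continuous_map_in_subtopology \<phi>_def
    by (intro conjI continuous_intros s t) (auto simp: Z)
  have loop: "continuous_map ?Z (subtopology (compact_open_topology X) (loops X x0)) (\<lambda>x. snd (fst x))"
    using continuous_map_compose[OF continuous_map_fst continuous_map_snd]
    by (simp add: o_def loop_space_def)
  have evaluation: "continuous_map
      (prod_topology (subtopology (compact_open_topology X) (loops X x0)) (top_of_set {0..1}))
      X (\<lambda>(\<alpha>,t). \<alpha> t)"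
    by (rule continuous_map_evaluation) (simp add: loops_def)
  have "continuous_map ?Z X ((\<lambda>(\<alpha>,t). \<alpha> t) \<circ> (\<lambda>x. (snd (fst x), \<phi> x)))"
    using continuous_map_pairedI[OF loop \<phi>] evaluation by (rule continuous_map_compose)
  then have loop_part: "continuous_map ?Z X (\<lambda>x. snd (fst x) (\<phi> x))"
    by (simp add: o_def)
  have "continuous_map ?Z (top_of_set {0..1}) \<psi>"
    unfolding continuous_map_in_subtopology \<psi>_def
    by (intro conjI continuous_intros s t) (auto simp: Z)
  then have "continuous_map ?Z X (p \<circ> \<psi>)"
    using p(1) unfolding pathin_def by (rule continuous_map_compose)
  then have path_part: "continuous_map ?Z X (\<lambda>x. p (\<psi> x))"
    by (simp add: o_def)
  have "continuous_map ?Z X (\<lambda>x. if snd x \<le> 1 - fst (fst x)/4 then snd (fst x) (\<phi> x) else p (\<psi> x))"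
  proof (rule continuous_map_cases_le)
    show "continuous_map ?Z euclideanreal (\<lambda>x. 1 - fst (fst x)/4)"
      by (intro continuous_intros s) auto
  next
    fix x :: "(real \<times> (real \<Rightarrow> 'a)) \<times> real"
    assume "x \<in> topspace ?Z" "snd x = 1 - fst (fst x)/4"
    then obtain s :: real and \<alpha> where "x = ((s, \<alpha>), 1 - s/4)" "s \<in> {0..1}" "\<alpha> \<in> loops X x0"
      by (auto simp: loop_space_def)
    \<comment> \<open>where the two pieces meet, the loop has reached its end point and the whisker its start\<close>
    then show "snd (fst x) (\<phi> x) = p (\<psi> x)"
      using p(2) by (simp add: \<phi>_def \<psi>_def loops_def)
  qed (simp_all add: t continuous_map_from_subtopology loop_part path_part)
  then show ?thesis
    by (rule continuous_map_eq) (auto simp: Z whisker_homotopy_def \<phi>_def \<psi>_def)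
qed

lemma whisker_homotopy_in_loops:
  assumes p: "pathin X p" "p 0 = x0" and "s \<in> {0..1}" "\<alpha> \<in> loops X x0"
  shows "whisker_homotopy p s \<alpha> \<in> loops X x0"
proof -
  have "continuous_map (top_of_set {0..1})
      (prod_topology (prod_topology (top_of_set {0..1}) (loop_space X x0)) (top_of_set {0..1}))
      (\<lambda>t. ((s,\<alpha>),t))"
    using assms by (intro continuous_map_pairedI continuous_map_id) (auto simp: loop_space_def)
  from continuous_map_compose[OF this continuous_map_whisker_homotopy[OF p]]
  have "pathin X (whisker_homotopy p s \<alpha>)"
    by (simp add: pathin_def o_def)
  moreover have "whisker_homotopy p s \<alpha> 0 = x0"
    using assms whisker_homotopy_head[of 0 s p \<alpha>] by (simp add: loops_def)
  moreover have "whisker_homotopy p s \<alpha> 1 = x0"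
    using assms by (auto simp: whisker_homotopy_def loops_def)
  moreover have "whisker_homotopy p s \<alpha> \<in> extensional {0..1}"
    by (simp add: whisker_homotopy_def extensional_def)
  ultimately show ?thesis
    by (simp add: loops_def)
qed

lemma continuous_map_whisker_homotopy_loop_space:
  assumes p: "pathin X p" "p 0 = x0"
  shows "continuous_map (prod_topology (top_of_set {0..1}) (loop_space X x0)) (loop_space X x0)
           (\<lambda>(s,\<alpha>). whisker_homotopy p s \<alpha>)"
proof -
  have "continuous_map (prod_topology (top_of_set {0..1}) (loop_space X x0)) (compact_open_topology X)
          (\<lambda>(s,\<alpha>). whisker_homotopy p s \<alpha>)"
    by (rule continuous_map_into_compact_open_topology)
      (use continuous_map_whisker_homotopy[OF p] in \<open>simp add: case_prod_unfold\<close>)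
  then show ?thesis
    using whisker_homotopy_in_loops[OF p]
    by (auto simp: loop_space_def continuous_map_in_subtopology)
qed

theorem lemma1:
  fixes X :: "'a topology" and x0 :: 'a
  assumes "\<exists>p. pathin X p \<and> p 0 = x0 \<and> (\<exists>t\<in>{0..1}. p t \<noteq> x0)"
  shows "homotopy_equivalence_map
           (subtopology (loop_space X x0) (loops X x0 - tf_loops X x0))
           (loop_space X x0) id"
proof -
  obtain p u where p: "pathin X p" "p 0 = x0" and u: "u \<in> {0..1}" "p u \<noteq> x0"
    using assms by blast
  have loops: "topspace (loop_space X x0) = loops X x0"
    by (simp add: loop_space_def)
  show ?thesis
  proof (rule homotopy_equivalence_map_inclusion)
    show "continuous_map (prod_topology (top_of_set {0..1}) (loop_space X x0)) (loop_space X x0)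
            (\<lambda>(s,\<alpha>). whisker_homotopy p s \<alpha>)"
      using p by (rule continuous_map_whisker_homotopy_loop_space)
    show "whisker_homotopy p 0 \<alpha> = \<alpha>" if "\<alpha> \<in> topspace (loop_space X x0)" for \<alpha>
      using that by (intro whisker_homotopy_0) (simp add: loops loops_def)
    show "whisker_homotopy p 1 \<alpha> \<in> loops X x0 - tf_loops X x0"
      if "\<alpha> \<in> topspace (loop_space X x0)" for \<alpha>
      using that u whisker_homotopy_1_notin_tf_loops[OF u(1), of p \<alpha>]
        whisker_homotopy_in_loops[OF p, of 1 \<alpha>]
      by (simp add: loops loops_def)
    show "whisker_homotopy p s \<alpha> \<in> loops X x0 - tf_loops X x0"
      if s: "s \<in> {0..1}" and \<alpha>: "\<alpha> \<in> loops X x0 - tf_loops X x0" for s \<alpha>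
      using \<alpha> whisker_homotopy_in_loops[OF p s, of \<alpha>] whisker_homotopy_notin_tf_loops[of \<alpha> X x0 s p] s
      by blast
  qed (auto simp: loops)
qed

end
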